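(* Let $k=3$, $\lambda>0$ and $0<\theta<1$. Put $\theta_c(3)=1/2$ and, for $\theta<1/2$, $\lambda_{\rm cr}(3)=\frac{1}{2-4\theta}\bigl(\frac43\bigr)^3$. Then: (1) if $\theta\ge1/2$, there is exactly one TISGM; (2) if $\theta<1/2$: (2a) if $\lambda\le\lambda_{\rm cr}(3)$ there is exactly one TISGM (corresponding to the solution $(x^*,x^* )$); (2b) if $\lambda>\lambda_{\rm cr}(3)$ there are exactly three TISGMs, corresponding to $(x^*,x^* )$ and two solutions $(x_1^*,x_2^* )$, $(x_2^*,x_1^* )$ with $x_1^*\ne x_2^*$.
   Context: SCWR model on the Cayley tree of order $k$ (each vertex has $k$ direct successors), spins in $\{-1,0,1\}$, activity $\lambda>0$, $\theta=e^{-J\beta}$; ferromagnetic means $0<\theta<1$. TISGMs are in one-to-one correspondence with the solutions $(x,y)\in(0,\infty)^2$ of $x=\lambda\bigl(\frac{1+x+\theta y}{1+x+y}\bigr)^k$, $y=\lambda\bigl(\frac{1+\theta x+y}{1+x+y}\bigr)^k$; the number of TISGMs is the number of such solutions. $x^*$ is the unique positive solution of $x=\lambda\bigl(\frac{1+(1+\theta)x}{1+2x}\bigr)^k$. *)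

theory Defs
  imports Complex_Main
begin

text \<open>Positive solutions (x,y) of the fixed-point system; these are in one-to-one
correspondence with the TISGMs of the SCWR model on the Cayley tree of order k.\<close>
definition scwr_solutions :: "nat \<Rightarrow> real \<Rightarrow> real \<Rightarrow> (real \<times> real) set" where
  "scwr_solutions k lam th = {(x, y). x > 0 \<and> y > 0 \<and>
      x = lam * ((1 + x + th * y) / (1 + x + y)) ^ k \<and>
      y = lam * ((1 + th * x + y) / (1 + x + y)) ^ k}"

definition num_TISGM :: "nat \<Rightarrow> real \<Rightarrow> real \<Rightarrow> nat" where
  "num_TISGM k lam th = card (scwr_solutions k lam th)"

definition x_star :: "nat \<Rightarrow> real \<Rightarrow> real \<Rightarrow> real" where
  "x_star k lam th = (THE x. x > 0 \<and> x = lam * ((1 + (1 + th) * x) / (1 + 2 * x)) ^ k)"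

definition lambda_cr3 :: "real \<Rightarrow> real" where
  "lambda_cr3 th = 1 / (2 - 4 * th) * (4 / 3) ^ 3"

end

theory Submission
  imports Defs
begin

text \<open>Writing \<open>x = u^3\<close>, \<open>y = v^3\<close> and \<open>L = root 3 \<lambda>\<close>, the system becomes polynomial in
  \<open>u, v\<close>. Diagonal solutions are the fixed points of a decreasing map, so there is exactly
  one, \<open>(x*, x*)\<close>. Off the diagonal, subtracting and adding the two equations shows that
  \<open>u v\<close> is determined by \<open>p = u + v\<close>, that \<open>u \<noteq> v\<close> (a positive discriminant) forces
  \<open>(1 - 2\<theta>) p^3 > 4\<close>, and that \<open>\<lambda> = branch_lambda \<theta> (p^3)\<close>. This function is strictly increasing and equals
  \<open>\<lambda>_cr(3)\<close> at \<open>p^3 = 4 / (1 - 2\<theta>)\<close>; hence off-diagonal solutions exist iff \<open>\<theta> < 1/2\<close>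
  and \<open>\<lambda> > \<lambda>_cr(3)\<close>, and then \<open>p\<close> is unique, so \<open>{u, v}\<close> is unique and there are
  exactly two of them, swapped by symmetry.\<close>

lemma scwr_solutions_swap:
  "(x, y) \<in> scwr_solutions k lam th \<Longrightarrow> (y, x) \<in> scwr_solutions k lam th"
  unfolding scwr_solutions_def by (auto simp: ac_simps)

lemma power_eq_mult_power_divide_iff:
  fixes a c s lam :: real
  assumes "k > 0" "lam > 0" "a \<ge> 0" "c \<ge> 0" "s > 0"
  shows "a ^ k = lam * (c / s) ^ k \<longleftrightarrow> a * s = root k lam * c"
proof -
  have "lam * (c / s) ^ k = (root k lam * c / s) ^ k"
    using assms by (simp add: power_mult_distrib power_divide real_root_pow_pos)
  also have "a ^ k = \<dots> \<longleftrightarrow> a = root k lam * c / s"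
    using assms by (intro power_eq_iff_eq_base) auto
  also have "\<dots> \<longleftrightarrow> a * s = root k lam * c"
    using assms by (simp add: field_simps)
  finally show ?thesis .
qed

lemma power_mem_scwr_solutions_iff:
  fixes u v lam th :: real
  assumes "k > 0" "lam > 0" "th \<ge> 0" "u > 0" "v > 0"
  shows "(u ^ k, v ^ k) \<in> scwr_solutions k lam th \<longleftrightarrow>
    u * (1 + u ^ k + v ^ k) = root k lam * (1 + u ^ k + th * v ^ k) \<and>
    v * (1 + u ^ k + v ^ k) = root k lam * (1 + th * u ^ k + v ^ k)"
proof -
  have pos: "u ^ k > 0" "v ^ k > 0" using assms by simp_all
  moreover have "th * u ^ k \<ge> 0" "th * v ^ k \<ge> 0" using assms pos by simp_all
  ultimately have "1 + u ^ k + v ^ k > 0" "1 + u ^ k + th * v ^ k \<ge> 0" "1 + th * u ^ k + v ^ k \<ge> 0"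
    by linarith+
  with pos show ?thesis
    unfolding scwr_solutions_def
    using assms power_eq_mult_power_divide_iff[OF assms(1,2)] by simp
qed

lemma symmetric_fixed_point_unique:
  fixes lam th x y :: real
  assumes "k > 0" "lam > 0" "0 \<le> th" "th < 1" "x > 0" "y > 0"
    and "x = lam * ((1 + (1 + th) * x) / (1 + 2 * x)) ^ k"
    and "y = lam * ((1 + (1 + th) * y) / (1 + 2 * y)) ^ k"
  shows "x = y"
proof -
  define g where "g z = lam * ((1 + (1 + th) * z) / (1 + 2 * z)) ^ k" for z :: real
  have "strict_mono_on {0<..} (\<lambda>z. z - g z)"
  proof (rule strict_mono_onI)
    fix a b :: real assume "a \<in> {0<..}" "b \<in> {0<..}" "a < b"
    have "(1 + (1 + th) * a) * (1 + 2 * b) - (1 + (1 + th) * b) * (1 + 2 * a) = (1 - th) * (b - a)"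
      by algebra
    with \<open>a < b\<close> assms have "(1 + (1 + th) * b) * (1 + 2 * a) < (1 + (1 + th) * a) * (1 + 2 * b)"
      by (smt (verit) mult_pos_pos)
    with \<open>a \<in> {0<..}\<close> \<open>b \<in> {0<..}\<close>
    have "(1 + (1 + th) * b) / (1 + 2 * b) < (1 + (1 + th) * a) / (1 + 2 * a)"
      by (simp add: divide_simps)
    with \<open>b \<in> {0<..}\<close> assms have "g b < g a"
      unfolding g_def by (intro mult_strict_left_mono power_strict_mono) auto
    with \<open>a < b\<close> show "a - g a < b - g b" by simp
  qed
  moreover have "x - g x = y - g y" using assms unfolding g_def by simp
  ultimately show ?thesis using assms by (auto dest: strict_mono_on_eqD)
qed

lemma symmetric_fixed_point_exists:
  fixes lam th :: real
  assumes "lam > 0" "0 \<le> th" "th < 1"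
  shows "\<exists>x>0. x = lam * ((1 + (1 + th) * x) / (1 + 2 * x)) ^ k"
proof -
  define f where "f x = x - lam * ((1 + (1 + th) * x) / (1 + 2 * x)) ^ k" for x :: real
  have "continuous_on {0..lam} f"
    unfolding f_def by (intro continuous_intros) (auto simp: add_pos_nonneg)
  moreover have "f 0 < 0" using assms unfolding f_def by simp
  moreover have "f lam \<ge> 0"
  proof -
    have "0 \<le> (1 + (1 + th) * lam) / (1 + 2 * lam)" "(1 + (1 + th) * lam) / (1 + 2 * lam) \<le> 1"
      using assms by (simp_all add: divide_simps)
    then have "((1 + (1 + th) * lam) / (1 + 2 * lam)) ^ k \<le> 1" by (rule power_le_one)
    with assms show ?thesis unfolding f_def
      by (metis diff_ge_0_iff_ge mult.right_neutral mult_left_mono less_imp_le)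
  qed
  ultimately obtain x where "0 \<le> x" "x \<le> lam" "f x = 0"
    using IVT'[of f 0 0 lam] assms by auto
  moreover from \<open>f 0 < 0\<close> \<open>f x = 0\<close> have "x \<noteq> 0" by auto
  ultimately show ?thesis unfolding f_def by (intro exI[of _ x]) auto
qed

lemma diag_mem_scwr_solutions_iff:
  assumes "k > 0" "lam > 0" "0 \<le> th" "th < 1"
  shows "(x, x) \<in> scwr_solutions k lam th \<longleftrightarrow> x = x_star k lam th"
proof -
  let ?P = "\<lambda>x. x > 0 \<and> x = lam * ((1 + (1 + th) * x) / (1 + 2 * x)) ^ k"
  obtain a where "?P a" using symmetric_fixed_point_exists[OF assms(2-4)] by blast
  then have P_iff: "?P x \<longleftrightarrow> x = a" for x
    using symmetric_fixed_point_unique[OF assms] by blast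
  then have x_star: "x_star k lam th = a"
    unfolding x_star_def by (simp add: the_equality)
  have diag: "1 + x + th * x = 1 + (1 + th) * x" "1 + th * x + x = 1 + (1 + th) * x"
    "1 + x + x = 1 + 2 * x"
    by algebra+
  have "(x, x) \<in> scwr_solutions k lam th \<longleftrightarrow> ?P x"
    unfolding scwr_solutions_def mem_Collect_eq prod.case diag by auto
  with P_iff x_star show ?thesis by simp
qed

lemma scwr_solutions_eq_diag:
  assumes "k > 0" "lam > 0" "0 \<le> th" "th < 1"
    and "\<And>x y. (x, y) \<in> scwr_solutions k lam th \<Longrightarrow> x = y"
  shows "scwr_solutions k lam th = {(x_star k lam th, x_star k lam th)}"
proof (intro set_eqI iffI)
  fix z assume "z \<in> scwr_solutions k lam th"
  moreover obtain x y where "z = (x, y)" by fastforce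
  ultimately show "z \<in> {(x_star k lam th, x_star k lam th)}"
    using assms(5) diag_mem_scwr_solutions_iff[OF assms(1-4)] by auto
qed (use diag_mem_scwr_solutions_iff[OF assms(1-4)] in auto)

text \<open>For an off-diagonal solution \<open>(x, y)\<close>, with \<open>p = root 3 x + root 3 y\<close> and \<open>t = p^3\<close>,
  one has \<open>root 3 \<lambda> = p * branch_ratio \<theta> t\<close>, i.e. \<open>\<lambda> = branch_lambda \<theta> t\<close>; conversely every
  \<open>t > 4 / (1 - 2\<theta>)\<close> yields such a solution at activity \<open>branch_lambda \<theta> t\<close>.\<close>

definition branch_ratio :: "real \<Rightarrow> real \<Rightarrow> real" where
  "branch_ratio th t = (t - 2) / ((1 + th) * t - 1)"

definition branch_lambda :: "real \<Rightarrow> real \<Rightarrow> real" where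
  "branch_lambda th t = t * branch_ratio th t ^ 3"

lemma branch_denominator_pos:
  fixes t th :: real
  assumes "2 < t" "0 \<le> th"
  shows "0 < (1 + th) * t - 1"
proof -
  have "(1 + th) * t = t + th * t" by algebra
  moreover have "0 \<le> th * t" using assms by simp
  ultimately show ?thesis using assms by linarith
qed

lemma branch_condition_imp_gt_two:
  fixes t th :: real
  assumes "0 \<le> th" "0 < t" "4 < (1 - 2 * th) * t"
  shows "2 < t"
proof -
  have "(1 - 2 * th) * t \<le> t" using assms by (simp add: algebra_simps)
  with assms show ?thesis by linarith
qed

lemma branch_ratio_pos: "2 < t \<Longrightarrow> 0 \<le> th \<Longrightarrow> 0 < branch_ratio th t"
  unfolding branch_ratio_def using branch_denominator_pos[of t th] by simp

lemma branch_ratio_strict_mono: "0 < th \<Longrightarrow> strict_mono_on {2<..} (branch_ratio th)"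
proof (rule strict_mono_onI)
  fix s t :: real assume "0 < th" "s \<in> {2<..}" "t \<in> {2<..}" "s < t"
  then have "0 < (1 + th) * s - 1" "0 < (1 + th) * t - 1"
    using branch_denominator_pos by simp_all
  moreover have
    "(t - 2) * ((1 + th) * s - 1) - (s - 2) * ((1 + th) * t - 1) = (t - s) * (1 + 2 * th)"
    by algebra
  with \<open>0 < th\<close> \<open>s < t\<close> have "(s - 2) * ((1 + th) * t - 1) < (t - 2) * ((1 + th) * s - 1)"
    by (smt (verit) mult_pos_pos)
  ultimately show "branch_ratio th s < branch_ratio th t"
    unfolding branch_ratio_def by (simp add: divide_simps)
qed

lemma branch_lambda_strict_mono: "0 < th \<Longrightarrow> strict_mono_on {2<..} (branch_lambda th)"
proof (rule strict_mono_onI)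
  fix s t :: real assume "0 < th" "s \<in> {2<..}" "t \<in> {2<..}" "s < t"
  then have "branch_ratio th s < branch_ratio th t"
    using branch_ratio_strict_mono strict_mono_onD by blast
  with \<open>0 < th\<close> \<open>s \<in> {2<..}\<close> have "branch_ratio th s ^ 3 < branch_ratio th t ^ 3"
    by (intro power_strict_mono) (auto intro: less_imp_le branch_ratio_pos)
  with \<open>0 < th\<close> \<open>s \<in> {2<..}\<close> \<open>s < t\<close> show "branch_lambda th s < branch_lambda th t"
    unfolding branch_lambda_def
    by (intro mult_strict_mono) (auto intro: less_imp_le branch_ratio_pos)
qed

lemma branch_ratio_threshold:
  assumes "0 \<le> th" "th < 1/2"
  shows "branch_ratio th (4 / (1 - 2 * th)) = 2 / 3"
proof -
  have nz: "1 - 2 * th \<noteq> 0" "1 + 2 * th \<noteq> 0" using assms by simp_all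
  have num: "4 / (1 - 2 * th) - 2 = 2 * (1 + 2 * th) / (1 - 2 * th)"
    and den: "(1 + th) * (4 / (1 - 2 * th)) - 1 = 3 * (1 + 2 * th) / (1 - 2 * th)"
    using nz by (simp_all add: field_simps)
  have "(2 * c / d) / (3 * c / d) = 2 / (3::real)" if "c \<noteq> 0" "d \<noteq> 0" for c d
    using that by simp
  then show ?thesis unfolding branch_ratio_def num den using nz by blast
qed

lemma branch_lambda_threshold:
  assumes "0 \<le> th" "th < 1/2"
  shows "branch_lambda th (4 / (1 - 2 * th)) = lambda_cr3 th"
  using assms unfolding branch_lambda_def branch_ratio_threshold[OF assms] lambda_cr3_def
  by (simp add: field_simps)

lemma lambda_cr3_pos: "th < 1/2 \<Longrightarrow> 0 < lambda_cr3 th"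
  unfolding lambda_cr3_def by simp

lemma branch_lambda_surj:
  assumes "0 < th" "th < 1/2" "lambda_cr3 th < lam"
  obtains t where "4 / (1 - 2 * th) < t" "branch_lambda th t = lam"
proof -
  define t0 where "t0 = 4 / (1 - 2 * th)"
  define T where "T = t0 + 27 / 8 * lam"
  have "4 \<le> t0" using assms unfolding t0_def by (simp add: field_simps)
  moreover have "0 < lambda_cr3 th" using assms lambda_cr3_pos by simp
  ultimately have t0T: "2 < t0" "t0 \<le> T" using assms unfolding T_def by auto
  have lam_t0: "branch_lambda th t0 = lambda_cr3 th"
    unfolding t0_def using assms by (simp add: branch_lambda_threshold)
  have "2 / 3 \<le> branch_ratio th T"
    using strict_mono_on_leD[OF branch_ratio_strict_mono[OF \<open>0 < th\<close>], of t0 T] t0T assms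
    unfolding t0_def by (simp add: branch_ratio_threshold)
  then have "T * (2 / 3) ^ 3 \<le> branch_lambda th T"
    unfolding branch_lambda_def using t0T by (intro mult_left_mono power_mono) auto
  moreover have "lam \<le> T * (2 / 3) ^ 3" unfolding T_def using t0T by (simp add: field_simps)
  ultimately have lam_T: "lam \<le> branch_lambda th T" by linarith
  have "(1 + th) * t - 1 \<noteq> 0" if "t \<in> {t0..T}" for t
    using branch_denominator_pos[of t th] t0T that assms by auto
  then have "continuous_on {t0..T} (branch_lambda th)"
    unfolding branch_lambda_def branch_ratio_def by (intro continuous_intros) auto
  then obtain t where "t0 \<le> t" "t \<le> T" "branch_lambda th t = lam"
    using IVT'[of "branch_lambda th" t0 lam T] lam_T t0T lam_t0 assms by auto
  moreover from this have "t \<noteq> t0" using lam_t0 assms by auto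
  ultimately show thesis using that[of t] unfolding t0_def by auto
qed

lemma cube_system_offdiag_iff:
  fixes u v L th :: real
  assumes "0 < u" "0 < v" "u \<noteq> v" "0 < L" "0 \<le> th" "th < 1"
  shows "(u * (1 + u^3 + v^3) = L * (1 + u^3 + th * v^3) \<and>
          v * (1 + u^3 + v^3) = L * (1 + th * u^3 + v^3)) \<longleftrightarrow>
         ((1 + 2 * th) * (u + v) * (u * v) = 1 + th * (u + v)^3 \<and>
          L * ((1 + th) * (u + v)^3 - 1) = (u + v) * ((u + v)^3 - 2))"
    (is "?eqs \<longleftrightarrow> ?sum_prod")
proof
  define s where "s = 1 + u^3 + v^3"
  \<comment> \<open>Both directions pass through \<open>s = L (1 - \<theta>) (u^2 + u v + v^2)\<close>: it is the difference
    of the two equations divided by \<open>u - v\<close>, and together with it their sum is equivalent to the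
    two conditions on \<open>u + v\<close> and \<open>u v\<close>.\<close>
  assume ?eqs
  then have e1: "u * s = L * (1 + u^3 + th * v^3)" and e2: "v * s = L * (1 + th * u^3 + v^3)"
    unfolding s_def by auto
  have "(u - v) * s = (u - v) * (L * (1 - th) * (u^2 + u * v + v^2))"
    using e1 e2 by algebra
  with \<open>u \<noteq> v\<close> have pivot: "s = L * (1 - th) * (u^2 + u * v + v^2)" by simp
  have "(u + v) * s = L * (2 + (1 + th) * (u^3 + v^3))" using e1 e2 by algebra
  with pivot
  have "L * ((u + v) * (1 - th) * (u^2 + u * v + v^2)) = L * (2 + (1 + th) * (u^3 + v^3))"
    by algebra
  with \<open>0 < L\<close> have "(u + v) * (1 - th) * (u^2 + u * v + v^2) = 2 + (1 + th) * (u^3 + v^3)"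
    by simp
  then have r1: "(1 + 2 * th) * (u + v) * (u * v) = 1 + th * (u + v)^3" by algebra
  then have "(1 - th) * (L * ((1 + th) * (u + v)^3 - 1)) = (1 - th) * ((u + v) * ((u + v)^3 - 2))"
    using pivot unfolding s_def by algebra
  with \<open>th < 1\<close> show ?sum_prod using r1 by simp
next
  define s where "s = 1 + u^3 + v^3"
  assume ?sum_prod
  then have r1: "(1 + 2 * th) * (u + v) * (u * v) = 1 + th * (u + v)^3"
    and r2: "L * ((1 + th) * (u + v)^3 - 1) = (u + v) * ((u + v)^3 - 2)" by auto
  let ?c = "(1 + 2 * th) * (u + v)"
  have "?c * (L * (1 - th) * (u^2 + u * v + v^2)) = L * (1 - th) * ((1 + th) * (u + v)^3 - 1)"
    using r1 by algebra
  also have "\<dots> = ?c * s"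
    using r1 r2 unfolding s_def by algebra
  finally have "?c * (L * (1 - th) * (u^2 + u * v + v^2)) = ?c * s" .
  moreover have "?c \<noteq> 0" using assms by simp
  ultimately have pivot: "s = L * (1 - th) * (u^2 + u * v + v^2)" by simp
  have "u * s - L * (1 + u^3 + th * v^3) - (v * s - L * (1 + th * u^3 + v^3)) = 0"
    and "u * s - L * (1 + u^3 + th * v^3) + (v * s - L * (1 + th * u^3 + v^3)) = 0"
    using pivot r1 by algebra+
  then show ?eqs unfolding s_def by linarith
qed

lemma offdiag_solution_branch:
  fixes lam th x y :: real
  assumes "0 < lam" "0 < th" "th < 1" "(x, y) \<in> scwr_solutions 3 lam th" "x \<noteq> y"
  obtains p where "0 < p" "4 < (1 - 2 * th) * p^3" "lam = branch_lambda th (p^3)"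
    "root 3 x + root 3 y = p" "(1 + 2 * th) * p * (root 3 x * root 3 y) = 1 + th * p^3"
proof -
  define u v p where "u = root 3 x" and "v = root 3 y" and "p = u + v"
  have "0 < x" "0 < y" using assms(4) unfolding scwr_solutions_def by auto
  then have uv: "0 < u" "0 < v" "u^3 = x" "v^3 = y"
    unfolding u_def v_def by (auto simp: real_root_pow_pos)
  with \<open>x \<noteq> y\<close> have "u \<noteq> v" by auto
  have "0 < p" using uv unfolding p_def by simp
  have L: "0 < root 3 lam" "root 3 lam ^ 3 = lam"
    using assms by (auto simp: real_root_pow_pos)
  from assms(4) have "(u^3, v^3) \<in> scwr_solutions 3 lam th" using uv by simp
  then have "u * (1 + u^3 + v^3) = root 3 lam * (1 + u^3 + th * v^3) \<and>
      v * (1 + u^3 + v^3) = root 3 lam * (1 + th * u^3 + v^3)"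
    using power_mem_scwr_solutions_iff[of 3 lam th u v] assms uv by simp
  then have r1: "(1 + 2 * th) * p * (u * v) = 1 + th * p^3"
    and r2: "root 3 lam * ((1 + th) * p^3 - 1) = p * (p^3 - 2)"
    using cube_system_offdiag_iff[of u v "root 3 lam" th] uv \<open>u \<noteq> v\<close> L assms
    unfolding p_def by auto
  \<comment> \<open>\<open>(u - v)^2\<close> is the discriminant of \<open>z^2 - p z + u v\<close>\<close>
  have "(1 + 2 * th) * p * (u - v)^2 = (1 - 2 * th) * p^3 - 4"
    using r1 unfolding p_def by algebra
  moreover have "0 < (1 + 2 * th) * p * (u - v)^2"
    using \<open>0 < p\<close> \<open>u \<noteq> v\<close> assms by simp
  ultimately have big: "4 < (1 - 2 * th) * p^3" by linarith
  then have "2 < p^3" using branch_condition_imp_gt_two[of th "p^3"] \<open>0 < p\<close> assms by simp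
  then have "root 3 lam = p * branch_ratio th (p^3)"
    using r2 branch_denominator_pos[of "p^3" th] assms unfolding branch_ratio_def
    by (simp add: field_simps)
  then have "lam = branch_lambda th (p^3)"
    unfolding branch_lambda_def using L by (simp add: power_mult_distrib)
  with \<open>0 < p\<close> big r1 show thesis using that unfolding u_def v_def p_def by blast
qed

lemma offdiag_solution_of_branch:
  fixes lam th p :: real
  assumes "0 < lam" "0 < th" "th < 1" "0 < p"
    and "4 < (1 - 2 * th) * p^3" "lam = branch_lambda th (p^3)"
  obtains u v where "0 < u" "0 < v" "u \<noteq> v" "(u^3, v^3) \<in> scwr_solutions 3 lam th"
proof -
  define q where "q = (1 + th * p^3) / ((1 + 2 * th) * p)"
  have pq: "(1 + 2 * th) * p * q = 1 + th * p^3" unfolding q_def using assms by simp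
  have "0 < q" unfolding q_def using assms by (simp add: add_pos_pos)
  define D where "D = p^2 - 4 * q"
  have "(1 + 2 * th) * p * D = (1 - 2 * th) * p^3 - 4" unfolding D_def using pq by algebra
  with assms have "0 < ((1 + 2 * th) * p) * D" by simp
  moreover have "0 < (1 + 2 * th) * p" using assms by simp
  ultimately have "0 < D" by (rule zero_less_mult_pos)
  define u v where "u = (p + sqrt D) / 2" and "v = (p - sqrt D) / 2"
  have "sqrt D < p" using \<open>0 < q\<close> assms(4) unfolding D_def by (simp add: real_less_lsqrt)
  moreover have "0 < sqrt D" using \<open>0 < D\<close> by simp
  ultimately have uv: "0 < u" "0 < v" "u \<noteq> v"
    using assms(4) unfolding u_def v_def by (auto simp: add_pos_pos)
  have sum: "u + v = p" unfolding u_def v_def by (simp add: field_simps)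
  have prod: "u * v = q"
    using \<open>0 < D\<close> unfolding u_def v_def D_def by (simp add: field_simps power2_eq_square)
  have "2 < p^3" using branch_condition_imp_gt_two[of th "p^3"] assms by simp
  then have den: "0 < (1 + th) * p^3 - 1" using branch_denominator_pos assms by simp
  have root_lam: "root 3 lam = p * branch_ratio th (p^3)"
    using assms branch_ratio_pos[OF \<open>2 < p^3\<close>, of th] unfolding branch_lambda_def
    by (intro real_root_pos_unique) (auto simp: power_mult_distrib)
  have "(1 + 2 * th) * (u + v) * (u * v) = 1 + th * (u + v)^3"
    using pq sum prod by simp
  moreover have "root 3 lam * ((1 + th) * (u + v)^3 - 1) = (u + v) * ((u + v)^3 - 2)"
    using den unfolding sum root_lam branch_ratio_def by simp
  ultimately have "u * (1 + u^3 + v^3) = root 3 lam * (1 + u^3 + th * v^3) \<and>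
      v * (1 + u^3 + v^3) = root 3 lam * (1 + th * u^3 + v^3)"
    using cube_system_offdiag_iff[of u v "root 3 lam" th] uv assms by simp
  then have "(u^3, v^3) \<in> scwr_solutions 3 lam th"
    using power_mem_scwr_solutions_iff[of 3 lam th u v] assms uv by simp
  with uv show thesis using that by blast
qed

lemma sum_prod_eq_cases:
  fixes a b c d :: "'a :: idom"
  assumes "a + b = c + d" "a * b = c * d"
  shows "(a = c \<and> b = d) \<or> (a = d \<and> b = c)"
proof -
  have "(a - c) * (a - d) = 0" using assms by algebra
  then show ?thesis using assms by auto
qed

lemma offdiag_solution_imp_supercritical:
  assumes "0 < lam" "0 < th" "th < 1" "(x, y) \<in> scwr_solutions 3 lam th" "x \<noteq> y"
  shows "th < 1/2 \<and> lambda_cr3 th < lam"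
proof -
  obtain p where p: "0 < p" "4 < (1 - 2 * th) * p^3" "lam = branch_lambda th (p^3)"
    using offdiag_solution_branch[OF assms] by blast
  have "th < 1/2"
  proof (rule ccontr)
    assume "\<not> th < 1/2"
    then have "(1 - 2 * th) * p^3 \<le> 0" using p by (simp add: mult_nonpos_nonneg)
    with p show False by simp
  qed
  then have "4 / (1 - 2 * th) < p^3" "2 < 4 / (1 - 2 * th)"
    using p assms by (simp_all add: field_simps)
  then have "branch_lambda th (4 / (1 - 2 * th)) < branch_lambda th (p^3)"
    using strict_mono_onD[OF branch_lambda_strict_mono[OF \<open>0 < th\<close>]] by simp
  with \<open>th < 1/2\<close> p assms show ?thesis by (simp add: branch_lambda_threshold)
qed

lemma offdiag_solutions_eq_or_swap:
  assumes "0 < lam" "0 < th" "th < 1"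
    and "(x, y) \<in> scwr_solutions 3 lam th" "x \<noteq> y"
    and "(x', y') \<in> scwr_solutions 3 lam th" "x' \<noteq> y'"
  shows "(x', y') = (x, y) \<or> (x', y') = (y, x)"
proof -
  obtain p where p: "0 < p" "4 < (1 - 2 * th) * p^3" "lam = branch_lambda th (p^3)"
    "root 3 x + root 3 y = p" "(1 + 2 * th) * p * (root 3 x * root 3 y) = 1 + th * p^3"
    using offdiag_solution_branch[OF assms(1-5)] by blast
  obtain p' where p': "0 < p'" "4 < (1 - 2 * th) * p'^3" "lam = branch_lambda th (p'^3)"
    "root 3 x' + root 3 y' = p'" "(1 + 2 * th) * p' * (root 3 x' * root 3 y') = 1 + th * p'^3"
    using offdiag_solution_branch[OF assms(1-3,6,7)] by blast
  have "2 < p^3" "2 < p'^3"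
    using branch_condition_imp_gt_two[of th] assms p(1,2) p'(1,2) by simp_all
  then have "p'^3 = p^3"
    using strict_mono_on_eqD[OF branch_lambda_strict_mono[OF \<open>0 < th\<close>]] p p' by simp
  then have "p' = p" using p p' by (simp add: power_eq_iff_eq_base)
  then have "root 3 x' + root 3 y' = root 3 x + root 3 y"
    and "((1 + 2 * th) * p) * (root 3 x' * root 3 y') = ((1 + 2 * th) * p) * (root 3 x * root 3 y)"
    using p p' by simp_all
  moreover have "(1 + 2 * th) * p \<noteq> 0" using p assms by simp
  ultimately have "root 3 x' + root 3 y' = root 3 x + root 3 y"
    and "root 3 x' * root 3 y' = root 3 x * root 3 y"
    by simp_all
  then show ?thesis by (auto dest: sum_prod_eq_cases)
qed

lemma offdiag_solution_exists:
  assumes "0 < th" "th < 1/2" "lambda_cr3 th < lam"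
  obtains x y where "x \<noteq> y" "(x, y) \<in> scwr_solutions 3 lam th"
proof -
  have "0 < lam" using lambda_cr3_pos assms by fastforce
  obtain t where t: "4 / (1 - 2 * th) < t" "branch_lambda th t = lam"
    using branch_lambda_surj[OF assms] .
  moreover have "0 < 4 / (1 - 2 * th)" using assms by simp
  ultimately have "0 < t" by linarith
  then have p: "0 < root 3 t" "root 3 t ^ 3 = t" "4 < (1 - 2 * th) * root 3 t ^ 3"
    using t assms by (auto simp: real_root_pow_pos field_simps)
  obtain u v where "0 < u" "0 < v" "u \<noteq> v" "(u^3, v^3) \<in> scwr_solutions 3 lam th"
    using offdiag_solution_of_branch[OF \<open>0 < lam\<close> \<open>0 < th\<close> _ p(1,3)] t p(2) assms by auto
  moreover from this have "u^3 \<noteq> v^3" by (simp add: power_eq_iff_eq_base)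
  ultimately show thesis using that by blast
qed

lemma scwr_solutions_supercritical:
  assumes "0 < th" "th < 1/2" "lambda_cr3 th < lam"
  obtains x1 x2 where "x1 \<noteq> x2"
    "scwr_solutions 3 lam th = {(x_star 3 lam th, x_star 3 lam th), (x1, x2), (x2, x1)}"
proof -
  have lam: "0 < lam" using lambda_cr3_pos assms by fastforce
  obtain x1 x2 where x12: "x1 \<noteq> x2" "(x1, x2) \<in> scwr_solutions 3 lam th"
    using offdiag_solution_exists[OF assms] .
  have "(x, y) \<in> scwr_solutions 3 lam th \<longleftrightarrow>
      (x, y) \<in> {(x_star 3 lam th, x_star 3 lam th), (x1, x2), (x2, x1)}" for x y
    using diag_mem_scwr_solutions_iff[of 3 lam th x] offdiag_solutions_eq_or_swap[of lam th x1 x2 x y]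
      scwr_solutions_swap[OF x12(2)] x12 lam assms
    by (cases "x = y") auto
  then show thesis using that x12(1) by (simp add: set_eq_iff split_paired_All)
qed

theorem mainTheorem7:
  fixes lam th :: real
  assumes "lam > 0" and "0 < th" and "th < 1"
  shows "(th \<ge> 1/2 \<longrightarrow> num_TISGM 3 lam th = 1)
    \<and> (th < 1/2 \<longrightarrow> lam \<le> lambda_cr3 th \<longrightarrow>
          num_TISGM 3 lam th = 1 \<and>
          scwr_solutions 3 lam th = {(x_star 3 lam th, x_star 3 lam th)})
    \<and> (th < 1/2 \<longrightarrow> lam > lambda_cr3 th \<longrightarrow>
          num_TISGM 3 lam th = 3 \<and>
          (\<exists>x1 x2. x1 \<noteq> x2 \<and>
             scwr_solutions 3 lam th =
               {(x_star 3 lam th, x_star 3 lam th), (x1, x2), (x2, x1)}))"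
proof -
  let ?a = "x_star 3 lam th"
  have subcritical: "scwr_solutions 3 lam th = {(?a, ?a)}" if "\<not> (th < 1/2 \<and> lambda_cr3 th < lam)"
    using scwr_solutions_eq_diag[of 3 lam th] offdiag_solution_imp_supercritical[of lam th] that assms
    by fastforce
  have supercritical: "num_TISGM 3 lam th = 3 \<and>
      (\<exists>x1 x2. x1 \<noteq> x2 \<and> scwr_solutions 3 lam th = {(?a, ?a), (x1, x2), (x2, x1)})"
    if crit: "th < 1/2" "lambda_cr3 th < lam"
  proof -
    obtain x1 x2 where "x1 \<noteq> x2" "scwr_solutions 3 lam th = {(?a, ?a), (x1, x2), (x2, x1)}"
      using scwr_solutions_supercritical[OF \<open>0 < th\<close> crit] .
    then show ?thesis unfolding num_TISGM_def by auto
  qed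
  show ?thesis using subcritical supercritical unfolding num_TISGM_def by auto
qed

end
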